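(* (i) Let $n\ge 3$ with $n\ne 4,6$, and $q>\frac12$. If $u\in C^{6}(\mathbb{R}^{n})$, $u>0$, is a radially symmetric solution of $\Delta^{3}u=u^{-q}$ in $\mathbb{R}^{n}$ with $\liminf_{|x|\to+\infty}u(x)/|x|^{4}\in(0,+\infty]$, then $$\lim_{|x|\to+\infty}\frac{u(x)}{|x|^{4}}=\frac{1}{8n(n+2)}\lim_{|x|\to+\infty}\Delta^{2}u(x)\in(0,+\infty).$$ (ii) Let $n\ge 2$, $q>0$, and let $u\in C^{6}(\mathbb{R}^{n})$, $u>0$, be a radially symmetric solution of $\Delta^{3}u=u^{-q}$ in $\mathbb{R}^{n}$. (a) If $\lim_{|x|\to+\infty}\Delta^{2}u(x)\in(0,+\infty]$, then $\liminf_{|x|\to+\infty}u(x)/|x|^{4}\in(0,+\infty]$; if moreover $n\ge 3$, $n\ne 4,6$ and $q>\frac12$, then the limit formula in (i) holds. (b) If $\lim_{|x|\to+\infty}\Delta^{2}u(x)=0$, then $\Delta^{2}u<0$ and $\Delta u>0$ in $\mathbb{R}^{n}$, and there is $C>0$ with $u(x)\le C|x|^{2}$ for all $|x|$ sufficiently large. *)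

theory Defs
  imports "HOL-Analysis.Analysis"
begin

text \<open>Points of R^n are vectors of type real^'n (n = CARD('n)).
  Partial derivative of f in the i-th coordinate direction.\<close>
definition partial :: "'n::finite \<Rightarrow> (real^'n \<Rightarrow> real) \<Rightarrow> real^'n \<Rightarrow> real" where
  "partial i f x = deriv (\<lambda>t. f (x + t *\<^sub>R axis i 1)) 0"

definition laplacian :: "(real^'n::finite \<Rightarrow> real) \<Rightarrow> real^'n \<Rightarrow> real" where
  "laplacian f x = (\<Sum>i\<in>UNIV. partial i (partial i f) x)"

fun Ck :: "nat \<Rightarrow> (real^'n::finite \<Rightarrow> real) \<Rightarrow> bool" where
  "Ck 0 f = continuous_on UNIV f"
| "Ck (Suc k) f = (continuous_on UNIV f \<and>
      (\<forall>i x. (\<lambda>t. f (x + t *\<^sub>R axis i 1)) differentiable (at 0)) \<and>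
      (\<forall>i. Ck k (partial i f)))"

definition radial :: "(real^'n::finite \<Rightarrow> real) \<Rightarrow> bool" where
  "radial u \<longleftrightarrow> (\<forall>x y. norm x = norm y \<longrightarrow> u x = u y)"

definition radial_sol :: "real \<Rightarrow> (real^'n::finite \<Rightarrow> real) \<Rightarrow> bool" where
  "radial_sol q u \<longleftrightarrow> Ck 6 u \<and> (\<forall>x. u x > 0) \<and> radial u \<and>
     (\<forall>x. laplacian (laplacian (laplacian u)) x = u x powr (- q))"

end

(*
  Along a ray, u, \<Delta>u and \<Delta>\<^sup>2u become functions f, v, w of r = |x| linked by
  (r^(n-1) f')' = r^(n-1) v, (r^(n-1) v')' = r^(n-1) w and (r^(n-1) w')' = r^(n-1) f^(-q) > 0,
  so w is increasing.  If w has a positive limit L, integrating these identities four times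
  (l'Hopital) gives f(r) / r^4 \<rightarrow> L / (8n(n+2)).  If f grows at least like r^4, then
  f^(-q) = O(r^(-\<gamma>)) with 2 < \<gamma> < n, so w' = O(r^(1-\<gamma>)) is integrable: w is bounded and
  converges, and its limit is positive, since w < 0 would make v decreasing and f at most
  quadratic.  If w \<rightarrow> 0, then w < 0, and v > 0 because a negative value of the decreasing
  v would drive f to -\<infinity>.
*)

theory Submission
  imports Defs "HOL-Real_Asymp.Real_Asymp"
begin

section \<open>Smoothness and radial Laplacians\<close>

lemma partial_add:
  assumes "\<forall>i x. (\<lambda>t. f (x + t *\<^sub>R axis i 1)) differentiable (at 0)"
    and "\<forall>i x. (\<lambda>t. g (x + t *\<^sub>R axis i 1)) differentiable (at 0)"
  shows "partial i (\<lambda>x. f x + g x) = (\<lambda>x. partial i f x + partial i g x)"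
proof
  fix x
  have "(\<lambda>t. f (x + t *\<^sub>R axis i 1)) field_differentiable (at 0)"
    and "(\<lambda>t. g (x + t *\<^sub>R axis i 1)) field_differentiable (at 0)"
    using assms unfolding field_differentiable_def real_differentiable_def by blast+
  then show "partial i (\<lambda>x. f x + g x) x = partial i f x + partial i g x"
    unfolding partial_def by (rule deriv_add)
qed

lemma Ck_zero: "Ck m (\<lambda>x::real^'n::finite. 0::real)"
proof -
  have "partial i (\<lambda>x::real^'n. 0::real) = (\<lambda>x. 0)" for i
    by (simp add: partial_def fun_eq_iff)
  then show ?thesis by (induction m) simp_all
qed

lemma Ck_add: "Ck m f \<Longrightarrow> Ck m g \<Longrightarrow> Ck m (\<lambda>x. f x + g x)"
proof (induction m arbitrary: f g)
  case 0
  then show ?case by (simp add: continuous_on_add)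
next
  case (Suc m)
  then have df: "\<forall>i x. (\<lambda>t. f (x + t *\<^sub>R axis i 1)) differentiable (at 0)"
    and dg: "\<forall>i x. (\<lambda>t. g (x + t *\<^sub>R axis i 1)) differentiable (at 0)"
    by simp_all
  have "\<forall>i. Ck m (partial i (\<lambda>x. f x + g x))"
    unfolding partial_add[OF df dg] using Suc by simp
  with Suc.prems df dg show ?case
    by (simp add: continuous_on_add differentiable_add)
qed

lemma Ck_sum: "finite A \<Longrightarrow> (\<And>j. j \<in> A \<Longrightarrow> Ck m (g j)) \<Longrightarrow> Ck m (\<lambda>x. \<Sum>j\<in>A. g j x)"
  by (induction A rule: finite_induct) (simp_all add: Ck_zero Ck_add)

lemma Ck_laplacian: "Ck (Suc (Suc m)) f \<Longrightarrow> Ck m (laplacian f)"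
  unfolding laplacian_def[abs_def] by (rule Ck_sum) simp_all

definition ray :: "'n::finite \<Rightarrow> (real^'n \<Rightarrow> real) \<Rightarrow> real \<Rightarrow> real" where
  "ray k g r = g (r *\<^sub>R axis k 1)"

lemma ray_has_real_derivative:
  assumes "Ck (Suc m) g"
  shows "(ray k g has_real_derivative ray k (partial k g) r) (at r)"
proof -
  have "(\<lambda>t. g (r *\<^sub>R axis k 1 + t *\<^sub>R axis k 1)) differentiable (at 0)"
    using assms by simp
  then have "((\<lambda>t. g ((t + r) *\<^sub>R axis k 1)) has_real_derivative ray k (partial k g) r) (at 0)"
    unfolding partial_def ray_def
    by (simp add: DERIV_deriv_iff_real_differentiable scaleR_add_left add.commute)
  then show ?thesis
    using DERIV_shift[of "ray k g" _ 0 r] by (simp add: ray_def)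
qed

lemma radial_eq_ray:
  assumes "radial g"
  shows "g y = ray k g (norm y)"
proof -
  have "norm (norm y *\<^sub>R axis k (1::real)) = norm y" by simp
  then show ?thesis using assms unfolding radial_def ray_def by metis
qed

lemma norm_add_scaleR_axis:
  fixes y :: "real^'n::finite"
  shows "norm (y + t *\<^sub>R axis i 1) = sqrt ((norm y)\<^sup>2 + 2 * t * y $ i + t\<^sup>2)"
proof -
  have "(norm (y + t *\<^sub>R axis i 1))\<^sup>2 = inner (y + t *\<^sub>R axis i 1) (y + t *\<^sub>R axis i 1)"
    by (rule power2_norm_eq_inner)
  also have "\<dots> = inner y y + 2 * t * y $ i + t\<^sup>2"
    by (simp add: inner_add_left inner_add_right inner_axis inner_axis' power2_eq_square algebra_simps)
  also have "inner y y = (norm y)\<^sup>2" by (simp add: power2_norm_eq_inner)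
  finally show ?thesis by (metis norm_ge_zero real_sqrt_unique)
qed

lemma has_real_derivative_radial_along_axis:
  fixes y :: "real^'n::finite"
  assumes "y \<noteq> 0" and "(\<phi> has_real_derivative d) (at (norm y))"
  shows "((\<lambda>t. \<phi> (norm (y + t *\<^sub>R axis i 1))) has_real_derivative d * (y $ i / norm y)) (at 0)"
proof -
  have "((\<lambda>t. sqrt ((norm y)\<^sup>2 + 2 * t * y $ i + t\<^sup>2)) has_real_derivative y $ i / norm y) (at 0)"
    using assms(1) by (auto intro!: derivative_eq_intros simp: field_simps)
  from DERIV_chain2[OF _ this, of \<phi> d] assms(2) show ?thesis
    by (simp add: norm_add_scaleR_axis)
qed

lemma partial_radial:
  fixes F :: "real^'n::finite \<Rightarrow> real"
  assumes "\<And>y. F y = \<phi> (norm y)"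
    and "\<And>r. r > 0 \<Longrightarrow> (\<phi> has_real_derivative \<phi>' r) (at r)"
    and "y \<noteq> 0"
  shows "partial i F y = \<phi>' (norm y) * (y $ i / norm y)"
  unfolding partial_def assms(1)
  by (rule DERIV_imp_deriv has_real_derivative_radial_along_axis assms)+ (use assms(3) in simp)

lemma partial_partial_radial:
  fixes F :: "real^'n::finite \<Rightarrow> real"
  assumes F: "\<And>y. F y = \<phi> (norm y)"
    and d1: "\<And>r. r > 0 \<Longrightarrow> (\<phi> has_real_derivative \<phi>' r) (at r)"
    and d2: "\<And>r. r > 0 \<Longrightarrow> (\<phi>' has_real_derivative \<phi>'' r) (at r)"
    and x: "x \<noteq> 0"
  shows "partial i (partial i F) x =
     \<phi>'' (norm x) * (x $ i / norm x)\<^sup>2 + \<phi>' (norm x) * (1 / norm x - (x $ i)\<^sup>2 / norm x ^ 3)"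
proof -
  let ?e = "axis i (1::real)"
  have "\<forall>\<^sub>F t in nhds 0. partial i F (x + t *\<^sub>R ?e) =
      \<phi>' (norm (x + t *\<^sub>R ?e)) * ((x $ i + t) / norm (x + t *\<^sub>R ?e))"
  proof -
    have "\<forall>\<^sub>F t in nhds 0. dist t 0 < norm x"
      using x by (intro eventually_nhds_metric[THEN iffD2] exI[of _ "norm x"]) auto
    then have "\<forall>\<^sub>F t in nhds 0. x + t *\<^sub>R ?e \<noteq> 0"
    proof eventually_elim
      case (elim t)
      then show ?case
        using norm_triangle_ineq4[of "x + t *\<^sub>R ?e" "t *\<^sub>R ?e"] by (auto simp: dist_real_def)
    qed
    then show ?thesis
      by eventually_elim (simp add: partial_radial[OF F d1])
  qed
  moreover have "((\<lambda>t. \<phi>' (norm (x + t *\<^sub>R ?e)) * ((x $ i + t) / norm (x + t *\<^sub>R ?e)))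
      has_real_derivative
      \<phi>'' (norm x) * (x $ i / norm x)\<^sup>2 + \<phi>' (norm x) * (1 / norm x - (x $ i)\<^sup>2 / norm x ^ 3)) (at 0)"
    using has_real_derivative_radial_along_axis[OF x d2[of "norm x"], of i]
      has_real_derivative_radial_along_axis[OF x DERIV_ident, of i] x
    by (auto intro!: derivative_eq_intros simp: field_simps power2_eq_square power3_eq_cube)
  ultimately show ?thesis
    unfolding partial_def[of i "partial i F"]
    by (intro DERIV_imp_deriv) (simp add: DERIV_cong_ev)
qed

lemma laplacian_radial:
  fixes F :: "real^'n::finite \<Rightarrow> real"
  assumes F: "\<And>y. F y = \<phi> (norm y)"
    and d1: "\<And>r. r > 0 \<Longrightarrow> (\<phi> has_real_derivative \<phi>' r) (at r)"
    and d2: "\<And>r. r > 0 \<Longrightarrow> (\<phi>' has_real_derivative \<phi>'' r) (at r)"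
    and x: "x \<noteq> 0"
  shows "laplacian F x = \<phi>'' (norm x) + (real CARD('n) - 1) / norm x * \<phi>' (norm x)"
proof -
  have sq: "(\<Sum>i\<in>UNIV. (x $ i)\<^sup>2) = (norm x)\<^sup>2"
    unfolding power2_norm_eq_inner inner_vec_def by (simp add: power2_eq_square)
  have "laplacian F x = (\<Sum>i\<in>UNIV.
      \<phi>'' (norm x) * (x $ i / norm x)\<^sup>2 + \<phi>' (norm x) * (1 / norm x - (x $ i)\<^sup>2 / norm x ^ 3))"
    unfolding laplacian_def using partial_partial_radial[OF F d1 d2 x] by simp
  also have "\<dots> = \<phi>'' (norm x) / (norm x)\<^sup>2 * (\<Sum>i\<in>UNIV. (x $ i)\<^sup>2)
      + \<phi>' (norm x) * (real CARD('n) / norm x - (\<Sum>i\<in>UNIV. (x $ i)\<^sup>2) / norm x ^ 3)"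
    by (simp add: sum.distrib sum_subtractf sum_distrib_left sum_divide_distrib
        power_divide algebra_simps)
  also have "\<dots> = \<phi>'' (norm x) + (real CARD('n) - 1) / norm x * \<phi>' (norm x)"
    using x unfolding sq by (simp add: field_simps power2_eq_square power3_eq_cube)
  finally show ?thesis .
qed

lemma laplacian_ray:
  fixes g :: "real^'n::finite \<Rightarrow> real"
  assumes "Ck (Suc (Suc m)) g" "radial g" "r > 0"
  shows "ray k (laplacian g) r =
    ray k (partial k (partial k g)) r + (real CARD('n) - 1) / r * ray k (partial k g) r"
proof -
  have "Ck (Suc m) (partial k g)"
    using assms(1) by simp
  from laplacian_radial[OF radial_eq_ray[OF assms(2)] ray_has_real_derivative[OF assms(1)]
      ray_has_real_derivative[OF this], of "r *\<^sub>R axis k 1"] assms(3)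
  show ?thesis by (simp add: ray_def axis_eq_0_iff)
qed

lemma radial_laplacian:
  fixes g :: "real^'n::finite \<Rightarrow> real"
  assumes "Ck (Suc (Suc m)) g" "radial g"
  shows "radial (laplacian g)"
  unfolding radial_def
proof (intro allI impI)
  fix x y :: "real^'n" assume xy: "norm x = norm y"
  obtain k :: 'n where True by simp
  have "Ck (Suc m) (partial k g)"
    using assms(1) by simp
  note lap = laplacian_radial[OF radial_eq_ray[OF assms(2)] ray_has_real_derivative[OF assms(1)]
      ray_has_real_derivative[OF this]]
  show "laplacian g x = laplacian g y"
  proof (cases "x = 0")
    case True
    then show ?thesis using xy by simp
  next
    case False
    then have "y \<noteq> 0" using xy by auto
    with False show ?thesis using xy by (simp add: lap)
  qed
qed

section \<open>Comparison lemmas on the half-line\<close>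

lemma has_real_derivative_power_mult:
  fixes h :: "real \<Rightarrow> real"
  assumes "(h has_real_derivative h') (at s)" and "s \<noteq> 0"
  shows "((\<lambda>s. s ^ m * h s) has_real_derivative s ^ m * (h' + real m / s * h s)) (at s)"
proof -
  have "((\<lambda>s. s ^ m * h s) has_real_derivative real m * s ^ (m - 1) * h s + s ^ m * h') (at s)"
    using DERIV_mult[OF DERIV_pow[of m s UNIV] assms(1)] by (simp add: mult.commute)
  moreover have "real m * s ^ (m - 1) * h s + s ^ m * h' = s ^ m * (h' + real m / s * h s)"
    using assms(2) by (cases m) (simp_all add: field_simps)
  ultimately show ?thesis by simp
qed

lemma has_real_derivative_power_Suc:
  "((\<lambda>s::real. s ^ Suc k) has_real_derivative (real k + 1) * s ^ k) (at s)"
  using DERIV_pow[of "Suc k" s UNIV] by (simp add: add.commute)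

lemma DERIV_pos_imp_less_nonneg:
  fixes g :: "real \<Rightarrow> real"
  assumes "\<And>r. (g has_real_derivative g' r) (at r)" and "\<And>r. r > 0 \<Longrightarrow> g' r > 0"
    and "0 \<le> a" "a < b"
  shows "g a < g b"
proof (rule DERIV_pos_imp_increasing_open[OF assms(4)])
  fix x assume "a < x" "x < b"
  then show "\<exists>y. (g has_real_derivative y) (at x) \<and> y > 0"
    using assms by (intro exI[of _ "g' x"]) auto
next
  show "continuous_on {a..b} g"
    using assms(1) by (intro DERIV_continuous_on) (auto intro: has_field_derivative_at_within)
qed

lemma DERIV_neg_imp_greater_nonneg:
  fixes g :: "real \<Rightarrow> real"
  assumes "\<And>r. (g has_real_derivative g' r) (at r)" and "\<And>r. r > 0 \<Longrightarrow> g' r < 0"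
    and "0 \<le> a" "a < b"
  shows "g a > g b"
  using DERIV_pos_imp_less_nonneg[of "\<lambda>r. - g r" "\<lambda>r. - g' r" a b] assms
  by (auto intro: DERIV_minus)

text \<open>If \<open>h' + m h / r > 0\<close> then \<open>(r^m h)' > 0\<close>, and \<open>r^m h\<close> vanishes at \<open>0\<close>.\<close>

lemma pos_if_weighted_derivative_pos:
  fixes h :: "real \<Rightarrow> real"
  assumes "m \<ge> 1" and d: "\<And>r. (h has_real_derivative h' r) (at r)"
    and pos: "\<And>r. r > 0 \<Longrightarrow> h' r + real m / r * h r > 0" and "r > 0"
  shows "h r > 0"
proof -
  have "0 ^ m * h 0 < r ^ m * h r"
  proof (rule DERIV_pos_imp_increasing_open[OF \<open>r > 0\<close>])
    fix s :: real assume "0 < s" "s < r"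
    then show "\<exists>y. ((\<lambda>s. s ^ m * h s) has_real_derivative y) (at s) \<and> y > 0"
      using has_real_derivative_power_mult[OF d, of s m] pos[of s] by auto
  next
    show "continuous_on {0..r} (\<lambda>s. s ^ m * h s)"
      using d by (intro continuous_intros DERIV_continuous_on) (auto intro: has_field_derivative_at_within)
  qed
  moreover have "(0::real) ^ m = 0" using assms(1) by simp
  ultimately show ?thesis
    using assms(4) by (simp add: zero_less_mult_iff)
qed

lemma neg_if_weighted_derivative_neg:
  fixes h :: "real \<Rightarrow> real"
  assumes "m \<ge> 1" and "\<And>r. (h has_real_derivative h' r) (at r)"
    and "\<And>r. r > 0 \<Longrightarrow> h' r + real m / r * h r < 0" and "r > 0"
  shows "h r < 0"
proof -
  have "- h r > 0"
  proof (rule pos_if_weighted_derivative_pos[OF assms(1) _ _ assms(4)])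
    show "((\<lambda>r. - h r) has_real_derivative - h' s) (at s)" for s
      using assms(2) by (rule DERIV_minus)
    show "- h' s + real m / s * - h s > 0" if "s > 0" for s
      using assms(3)[OF that] by simp
  qed
  then show ?thesis by simp
qed

lemma le_power_if_DERIV_le:
  fixes G :: "real \<Rightarrow> real"
  assumes "continuous_on {0..r} G"
    and "\<And>s. 0 < s \<Longrightarrow> s < r \<Longrightarrow> (G has_real_derivative g s) (at s)"
    and "\<And>s. 0 < s \<Longrightarrow> s < r \<Longrightarrow> g s \<le> c * s ^ k" and "r \<ge> 0"
  shows "G r \<le> G 0 + c / (real k + 1) * r ^ Suc k"
proof -
  define H where "H s = G s - c / (real k + 1) * s ^ Suc k" for s
  have "H r \<le> H 0"
  proof (rule DERIV_nonpos_imp_decreasing_open[OF \<open>r \<ge> 0\<close>])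
    fix s :: real assume s: "0 < s" "s < r"
    have "(H has_real_derivative g s - c / (real k + 1) * ((real k + 1) * s ^ k)) (at s)"
      unfolding H_def by (rule DERIV_diff[OF assms(2)[OF s] DERIV_cmult[OF has_real_derivative_power_Suc]])
    moreover have "g s - c / (real k + 1) * ((real k + 1) * s ^ k) \<le> 0"
      using assms(3)[OF s] by simp
    ultimately show "\<exists>y. (H has_real_derivative y) (at s) \<and> y \<le> 0" by blast
  next
    show "continuous_on {0..r} H"
      unfolding H_def by (intro continuous_intros assms(1))
  qed
  then show ?thesis unfolding H_def by simp
qed

lemma le_powr_if_DERIV_le:
  fixes G :: "real \<Rightarrow> real"
  assumes "R > 0" and d: "\<And>s. s \<ge> R \<Longrightarrow> (G has_real_derivative g s) (at s)"
    and "\<And>s. s \<ge> R \<Longrightarrow> g s \<le> c * s powr p" and "p \<noteq> -1" and "r \<ge> R"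
  shows "G r \<le> G R + c * (r powr (p + 1) - R powr (p + 1)) / (p + 1)"
proof -
  define H where "H s = G s - c * s powr (p + 1) / (p + 1)" for s
  have "H r \<le> H R"
  proof (rule DERIV_nonpos_imp_nonincreasing[OF \<open>r \<ge> R\<close>])
    fix s assume s: "R \<le> s" "s \<le> r"
    have "(H has_real_derivative g s - c * ((p + 1) * s powr (p + 1 - 1)) / (p + 1)) (at s)"
      unfolding H_def using d[OF s(1)] s(1) \<open>R > 0\<close> by (auto intro!: derivative_eq_intros)
    moreover have "g s - c * ((p + 1) * s powr (p + 1 - 1)) / (p + 1) \<le> 0"
      using assms(3)[OF s(1)] \<open>p \<noteq> -1\<close> by simp
    ultimately show "\<exists>y. (H has_real_derivative y) (at s) \<and> y \<le> 0" by blast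
  qed
  then show ?thesis unfolding H_def by (simp add: field_simps diff_divide_distrib)
qed

lemma eventually_ge_power_if_weighted_DERIV_ge:
  fixes G g :: "real \<Rightarrow> real"
  assumes d: "\<And>r. r > 0 \<Longrightarrow> ((\<lambda>s. s ^ m * G s) has_real_derivative r ^ m * g r) (at r)"
    and lb: "\<forall>\<^sub>F r in at_top. c * r ^ k \<le> g r" and "c > 0"
  shows "\<exists>c'>0. \<forall>\<^sub>F r in at_top. c' * r ^ Suc k \<le> G r"
proof -
  obtain R where R: "\<And>r. r \<ge> R \<Longrightarrow> c * r ^ k \<le> g r"
    using lb unfolding eventually_at_top_linorder by blast
  define R0 where "R0 = max R 1"
  define a where "a = c / (real (m + k) + 1)"
  have "a > 0" unfolding a_def using \<open>c > 0\<close> by simp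
  define H where "H s = s ^ m * G s - a * s ^ Suc (m + k)" for s
  have H_mono: "H R0 \<le> H r" if "r \<ge> R0" for r
  proof (rule DERIV_nonneg_imp_nondecreasing[OF that])
    fix s assume "R0 \<le> s" "s \<le> r"
    then have s: "s \<ge> R" "s \<ge> 1" unfolding R0_def by auto
    have "(H has_real_derivative s ^ m * g s - a * ((real (m + k) + 1) * s ^ (m + k))) (at s)"
      unfolding H_def using s
      by (intro DERIV_diff d DERIV_cmult has_real_derivative_power_Suc) simp
    moreover have "a * ((real (m + k) + 1) * s ^ (m + k)) = s ^ m * (c * s ^ k)"
      unfolding a_def by (simp add: power_add)
    moreover have "s ^ m * (c * s ^ k) \<le> s ^ m * g s"
      using R[OF s(1)] s(2) by (intro mult_left_mono) auto
    ultimately show "\<exists>y. (H has_real_derivative y) (at s) \<and> 0 \<le> y" by force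
  qed
  have "a / 2 * r ^ Suc k \<le> G r" if r: "r \<ge> max R0 (2 * \<bar>H R0\<bar> / a)" for r
  proof -
    have r1: "r \<ge> 1" "r \<ge> R0" "2 * \<bar>H R0\<bar> \<le> a * r"
      using r \<open>a > 0\<close> unfolding R0_def by (auto simp: field_simps)
    have "r \<le> r ^ Suc (m + k)"
      using r1(1) by (metis power_one_right power_increasing le_add1 plus_1_eq_Suc zero_le_one)
    then have "\<bar>H R0\<bar> \<le> a / 2 * r ^ Suc (m + k)"
      using r1(3) \<open>a > 0\<close> mult_left_mono[of r "r ^ Suc (m + k)" a] by linarith
    then have "a / 2 * r ^ Suc (m + k) \<le> r ^ m * G r"
      using H_mono[OF r1(2)] unfolding H_def by linarith
    then have "r ^ m * (a / 2 * r ^ Suc k) \<le> r ^ m * G r"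
      by (simp add: power_add algebra_simps)
    then show ?thesis using r1(1) by (simp add: mult_le_cancel_left_pos)
  qed
  then have "\<forall>\<^sub>F r in at_top. a / 2 * r ^ Suc k \<le> G r"
    unfolding eventually_at_top_linorder by blast
  moreover have "a / 2 > 0" using \<open>a > 0\<close> by simp
  ultimately show ?thesis by blast
qed

lemma tendsto_div_power_if_weighted_DERIV:
  fixes G g :: "real \<Rightarrow> real"
  assumes d: "\<And>r. r > 0 \<Longrightarrow> ((\<lambda>s. s ^ m * G s) has_real_derivative r ^ m * g r) (at r)"
    and lim: "((\<lambda>r. g r / r ^ k) \<longlongrightarrow> A) at_top"
  shows "((\<lambda>r. G r / r ^ Suc k) \<longlongrightarrow> A / real (m + k + 1)) at_top"
proof -
  have "((\<lambda>r. r ^ m * G r / r ^ Suc (m + k)) \<longlongrightarrow> A / real (m + k + 1)) at_top"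
  proof (rule lhospital_at_top_at_top)
    show "filterlim (\<lambda>r::real. r ^ Suc (m + k)) at_top at_top"
      by (intro filterlim_pow_at_top filterlim_ident) simp
    show "\<forall>\<^sub>F r in at_top. ((\<lambda>s. s ^ m * G s) has_real_derivative r ^ m * g r) (at r)"
      using eventually_gt_at_top[of 0] by eventually_elim (rule d)
    show "\<forall>\<^sub>F r in at_top. ((\<lambda>r. r ^ Suc (m + k)) has_real_derivative real (m + k + 1) * r ^ (m + k)) (at r)"
      using has_real_derivative_power_Suc[of "m + k"] by (intro always_eventually allI) (simp add: add_ac)
    show "\<forall>\<^sub>F r in at_top. real (m + k + 1) * r ^ (m + k) \<noteq> 0"
      using eventually_gt_at_top[of 0] by eventually_elim simp
    have "((\<lambda>r. g r / r ^ k / real (m + k + 1)) \<longlongrightarrow> A / real (m + k + 1)) at_top"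
      by (intro tendsto_divide lim tendsto_const) simp
    moreover have "\<forall>\<^sub>F r in at_top. g r / r ^ k / real (m + k + 1) = r ^ m * g r / (real (m + k + 1) * r ^ (m + k))"
      using eventually_gt_at_top[of 0] by eventually_elim (simp add: power_add field_simps del: of_nat_add of_nat_Suc)
    ultimately show "((\<lambda>r. r ^ m * g r / (real (m + k + 1) * r ^ (m + k))) \<longlongrightarrow> A / real (m + k + 1)) at_top"
      by (rule Lim_transform_eventually)
  qed
  moreover have "\<forall>\<^sub>F r in at_top. r ^ m * G r / r ^ Suc (m + k) = G r / r ^ Suc k"
    using eventually_gt_at_top[of 0] by eventually_elim (simp add: power_add field_simps)
  ultimately show ?thesis by (rule Lim_transform_eventually)
qed

lemma le_powr_if_weighted_DERIV_le:
  fixes G g :: "real \<Rightarrow> real"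
  assumes "R \<ge> 1"
    and d: "\<And>r. r \<ge> R \<Longrightarrow> ((\<lambda>s. s ^ m * G s) has_real_derivative r ^ m * g r) (at r)"
    and ub: "\<And>r. r \<ge> R \<Longrightarrow> g r \<le> K * r powr (- \<gamma>)" and "K \<ge> 0" and "\<gamma> < real m + 1"
  shows "\<exists>M\<ge>0. \<forall>r\<ge>R. G r \<le> M * r powr (1 - \<gamma>)"
proof -
  define e where "e = real m + 1 - \<gamma>"
  have "e > 0" unfolding e_def using assms(5) by simp
  define M where "M = \<bar>R ^ m * G R\<bar> + K / e"
  have "G r \<le> M * r powr (1 - \<gamma>)" if r: "r \<ge> R" for r
  proof -
    have "r > 0" using r \<open>R \<ge> 1\<close> by simp
    have pow: "s ^ m = s powr real m" if "s > 0" for s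
      using that by (simp add: powr_realpow)
    have "r ^ m * G r \<le> R ^ m * G R + K * (r powr (real m - \<gamma> + 1) - R powr (real m - \<gamma> + 1)) / (real m - \<gamma> + 1)"
    proof (rule le_powr_if_DERIV_le[OF _ d _ _ r])
      fix s assume "s \<ge> R"
      then have "s > 0" using \<open>R \<ge> 1\<close> by simp
      have "s ^ m * g s \<le> s ^ m * (K * s powr (- \<gamma>))"
        using ub[OF \<open>s \<ge> R\<close>] \<open>s > 0\<close> by (intro mult_left_mono) auto
      also have "\<dots> = K * s powr (real m - \<gamma>)"
        using \<open>s > 0\<close> by (simp add: pow powr_add[symmetric])
      finally show "s ^ m * g s \<le> K * s powr (real m - \<gamma>)" .
    qed (use \<open>R \<ge> 1\<close> \<open>e > 0\<close> e_def in auto)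
    also have "\<dots> = R ^ m * G R + K / e * r powr e - K / e * R powr e"
      unfolding e_def by (simp add: algebra_simps diff_divide_distrib)
    also have "\<dots> \<le> \<bar>R ^ m * G R\<bar> + K / e * r powr e"
    proof -
      have "K / e * R powr e \<ge> 0" using \<open>K \<ge> 0\<close> \<open>e > 0\<close> by simp
      then show ?thesis using abs_ge_self[of "R ^ m * G R"] by linarith
    qed
    finally have "r ^ m * G r \<le> \<bar>R ^ m * G R\<bar> + K / e * r powr e" .
    then have "G r \<le> r powr (- real m) * (\<bar>R ^ m * G R\<bar> + K / e * r powr e)"
      using \<open>r > 0\<close> by (simp add: pow powr_minus field_simps)
    also have "\<dots> = \<bar>R ^ m * G R\<bar> * r powr (- real m) + K / e * r powr (1 - \<gamma>)"
      unfolding e_def by (simp add: algebra_simps powr_add[symmetric])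
    also have "\<dots> \<le> \<bar>R ^ m * G R\<bar> * r powr (1 - \<gamma>) + K / e * r powr (1 - \<gamma>)"
      using r \<open>R \<ge> 1\<close> assms(5) by (intro add_right_mono mult_left_mono powr_mono) auto
    finally show ?thesis unfolding M_def by (simp add: algebra_simps)
  qed
  moreover have "M \<ge> 0" unfolding M_def using \<open>K \<ge> 0\<close> \<open>e > 0\<close> by simp
  ultimately show ?thesis by blast
qed

lemma bounded_if_DERIV_le_powr:
  fixes G g :: "real \<Rightarrow> real"
  assumes "R > 0" and d: "\<And>r. r \<ge> R \<Longrightarrow> (G has_real_derivative g r) (at r)"
    and ub: "\<And>r. r \<ge> R \<Longrightarrow> g r \<le> M * r powr (1 - \<gamma>)" and "M \<ge> 0" and "\<gamma> > 2"
    and "r \<ge> R"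
  shows "G r \<le> G R + M * R powr (2 - \<gamma>) / (\<gamma> - 2)"
proof -
  have "G r \<le> G R + M * (r powr (1 - \<gamma> + 1) - R powr (1 - \<gamma> + 1)) / (1 - \<gamma> + 1)"
    by (rule le_powr_if_DERIV_le[OF \<open>R > 0\<close> d ub]) (use assms in auto)
  also have "\<dots> = G R + M * (R powr (2 - \<gamma>) - r powr (2 - \<gamma>)) / (\<gamma> - 2)"
    using \<open>\<gamma> > 2\<close> by (simp add: field_simps)
  also have "\<dots> \<le> G R + M * R powr (2 - \<gamma>) / (\<gamma> - 2)"
    using assms(4,5) by (intro add_left_mono divide_right_mono mult_left_mono) auto
  finally show ?thesis .
qed

lemma eventually_quadratic_less_quartic:
  fixes a b c :: real
  assumes "c > 0"
  shows "\<forall>\<^sub>F r in at_top. a + b * r\<^sup>2 < c * r ^ 4"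
proof -
  have "filterlim (\<lambda>r::real. c * r ^ 4 - b * r\<^sup>2 - a) at_top at_top"
    using assms by real_asymp
  then show ?thesis
    by (auto simp: filterlim_at_top_dense elim!: allE[of _ 0] eventually_mono)
qed

section \<open>Radial profiles\<close>

text \<open>The profiles \<open>f, v, w\<close> of \<open>u, \<Delta>u, \<Delta>\<^sup>2u\<close> along a ray, with their first two derivatives;
  the radial Laplacian is \<open>\<phi>'' + (n - 1) \<phi>' / r\<close>.\<close>

locale radial_profiles =
  fixes n :: nat and q :: real and f f' f'' v v' v'' w w' w'' :: "real \<Rightarrow> real"
  assumes n_ge_2: "n \<ge> 2"
    and f_deriv: "\<And>r. (f has_real_derivative f' r) (at r)"
    and f'_deriv: "\<And>r. (f' has_real_derivative f'' r) (at r)"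
    and v_deriv: "\<And>r. (v has_real_derivative v' r) (at r)"
    and v'_deriv: "\<And>r. (v' has_real_derivative v'' r) (at r)"
    and w_deriv: "\<And>r. (w has_real_derivative w' r) (at r)"
    and w'_deriv: "\<And>r. (w' has_real_derivative w'' r) (at r)"
    and f_pos: "\<And>r. f r > 0"
    and v_eq: "\<And>r. r > 0 \<Longrightarrow> v r = f'' r + (real n - 1) / r * f' r"
    and w_eq: "\<And>r. r > 0 \<Longrightarrow> w r = v'' r + (real n - 1) / r * v' r"
    and w_ode: "\<And>r. r > 0 \<Longrightarrow> w'' r + (real n - 1) / r * w' r = f r powr (- q)"
begin

lemma real_n_minus_1 [simp]: "real (n - Suc 0) = real n - 1"
  using n_ge_2 by simp

lemma f'_weighted_DERIV:
  "r > 0 \<Longrightarrow> ((\<lambda>s. s ^ (n - 1) * f' s) has_real_derivative r ^ (n - 1) * v r) (at r)"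
  using has_real_derivative_power_mult[OF f'_deriv, of r "n - 1"] v_eq[of r] by simp

lemma v'_weighted_DERIV:
  "r > 0 \<Longrightarrow> ((\<lambda>s. s ^ (n - 1) * v' s) has_real_derivative r ^ (n - 1) * w r) (at r)"
  using has_real_derivative_power_mult[OF v'_deriv, of r "n - 1"] w_eq[of r] by simp

lemma w'_weighted_DERIV:
  "r > 0 \<Longrightarrow> ((\<lambda>s. s ^ (n - 1) * w' s) has_real_derivative r ^ (n - 1) * f r powr (- q)) (at r)"
  using has_real_derivative_power_mult[OF w'_deriv, of r "n - 1"] w_ode[of r] by simp

lemma w'_pos:
  assumes "r > 0"
  shows "w' r > 0"
proof (rule pos_if_weighted_derivative_pos[OF _ w'_deriv _ assms])
  show "n - 1 \<ge> 1" using n_ge_2 by simp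
  show "w'' s + real (n - 1) / s * w' s > 0" if "s > 0" for s
    using w_ode[OF that] f_pos[of s] by simp
qed

lemma w_less: "0 \<le> a \<Longrightarrow> a < b \<Longrightarrow> w a < w b"
  by (rule DERIV_pos_imp_less_nonneg[OF w_deriv w'_pos])

lemma w_mono: "0 \<le> a \<Longrightarrow> a \<le> b \<Longrightarrow> w a \<le> w b"
  using w_less[of a b] by (cases "a = b") auto

lemma v'_neg_if_w_neg:
  assumes "\<And>r. r > 0 \<Longrightarrow> w r < 0" and "r > 0"
  shows "v' r < 0"
proof (rule neg_if_weighted_derivative_neg[OF _ v'_deriv _ assms(2)])
  show "n - 1 \<ge> 1" using n_ge_2 by simp
  show "v'' s + real (n - 1) / s * v' s < 0" if "s > 0" for s
    using w_eq[OF that] assms(1)[OF that] by simp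
qed

lemma f_le_quadratic_if_w_neg:
  assumes w_neg: "\<And>r. r > 0 \<Longrightarrow> w r < 0" and "r \<ge> 0"
  shows "f r \<le> f 0 + v 0 / (2 * real n) * r\<^sup>2"
proof -
  have f'_le: "f' s \<le> v 0 / real n * s ^ 1" if "s > 0" for s
  proof -
    have "s ^ (n - 1) * f' s \<le> 0 ^ (n - 1) * f' 0 + v 0 / (real (n - 1) + 1) * s ^ Suc (n - 1)"
    proof (rule le_power_if_DERIV_le[where g = "\<lambda>s. s ^ (n - 1) * v s"])
      show "continuous_on {0..s} (\<lambda>s. s ^ (n - 1) * f' s)"
        using f'_deriv by (intro continuous_intros DERIV_continuous_on) (auto intro: has_field_derivative_at_within)
      fix t assume t: "0 < t" "t < s"
      then show "((\<lambda>s. s ^ (n - 1) * f' s) has_real_derivative t ^ (n - 1) * v t) (at t)"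
        by (intro f'_weighted_DERIV)
      have "v t \<le> v 0"
        using DERIV_neg_imp_greater_nonneg[OF v_deriv v'_neg_if_w_neg[OF w_neg], of 0 t] t by simp
      then show "t ^ (n - 1) * v t \<le> v 0 * t ^ (n - 1)"
        using t by (simp add: mult.commute mult_left_mono)
    qed (use that in simp)
    moreover have "s ^ n = s * s ^ (n - 1)"
      using n_ge_2 by (cases n) simp_all
    ultimately have "s ^ (n - 1) * f' s \<le> s ^ (n - 1) * (v 0 / real n * s)"
      using n_ge_2 by (simp add: algebra_simps power_0_left)
    then show ?thesis
      using that mult_le_cancel_left_pos[of "s ^ (n - 1)" "f' s" "v 0 / real n * s ^ 1"] by simp
  qed
  have "f r \<le> f 0 + v 0 / real n / (real 1 + 1) * r ^ Suc 1"
    by (rule le_power_if_DERIV_le[OF _ f_deriv f'_le \<open>r \<ge> 0\<close>])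
      (use f_deriv in \<open>auto intro: DERIV_continuous_on has_field_derivative_at_within\<close>)
  then show ?thesis by (simp add: power2_eq_square mult.commute)
qed

lemma w_neg_if_tendsto_0:
  assumes "(w \<longlongrightarrow> 0) at_top" and "r \<ge> 0"
  shows "w r < 0"
proof -
  have "\<forall>\<^sub>F s in at_top. w (r + 1) \<le> w s"
    using eventually_ge_at_top[of "r + 1"] by eventually_elim (use assms in \<open>auto intro: w_mono\<close>)
  then have "w (r + 1) \<le> 0"
    by (intro tendsto_lowerbound[OF assms(1)]) simp_all
  then show ?thesis using w_less[OF \<open>r \<ge> 0\<close>, of "r + 1"] by simp
qed

text \<open>Otherwise \<open>v\<close> is eventually below a negative constant, and integrating twice
  drives \<open>f\<close> to \<open>-\<infinity>\<close>.\<close>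

lemma v_pos_if_tendsto_0:
  assumes "(w \<longlongrightarrow> 0) at_top" and "r0 \<ge> 0"
  shows "v r0 > 0"
proof (rule ccontr)
  assume "\<not> v r0 > 0"
  have v'_neg: "v' s < 0" if "s > 0" for s
    using v'_neg_if_w_neg w_neg_if_tendsto_0[OF assms(1)] that by simp
  define c where "c = - v (r0 + 1)"
  have "c > 0"
    using DERIV_neg_imp_greater_nonneg[OF v_deriv v'_neg \<open>r0 \<ge> 0\<close>, of "r0 + 1"] \<open>\<not> v r0 > 0\<close>
    unfolding c_def by simp
  have "c * s ^ 0 \<le> - v s" if "s \<ge> r0 + 1" for s
    using DERIV_neg_imp_greater_nonneg[OF v_deriv v'_neg, of "r0 + 1" s] that \<open>r0 \<ge> 0\<close>
    unfolding c_def by (cases "s = r0 + 1") auto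
  then have "\<forall>\<^sub>F s in at_top. c * s ^ 0 \<le> - v s"
    unfolding eventually_at_top_linorder by blast
  moreover have "((\<lambda>s. s ^ (n - 1) * - f' s) has_real_derivative s ^ (n - 1) * - v s) (at s)"
    if "s > 0" for s
    using DERIV_minus[OF f'_weighted_DERIV[OF that]] by simp
  ultimately have "\<exists>c1>0. \<forall>\<^sub>F s in at_top. c1 * s ^ Suc 0 \<le> - f' s"
    by (intro eventually_ge_power_if_weighted_DERIV_ge[OF _ _ \<open>c > 0\<close>])
  then obtain c1 where "c1 > 0" "\<forall>\<^sub>F s in at_top. c1 * s ^ Suc 0 \<le> - f' s" by blast
  moreover have "((\<lambda>s. s ^ 0 * - f s) has_real_derivative s ^ 0 * - f' s) (at s)" for s
    using DERIV_minus[OF f_deriv] by simp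
  ultimately have "\<exists>c2>0. \<forall>\<^sub>F s in at_top. c2 * s ^ Suc 1 \<le> - f s"
    by (intro eventually_ge_power_if_weighted_DERIV_ge[of 0 "\<lambda>s. - f s" "\<lambda>s. - f' s"]) simp_all
  then obtain c2 R where "c2 > 0" and R: "\<And>s. s \<ge> R \<Longrightarrow> c2 * s ^ Suc 1 \<le> - f s"
    unfolding eventually_at_top_linorder by blast
  then have "c2 * (max R 1) ^ Suc 1 > 0" by simp
  then show False using R[of "max R 1"] f_pos[of "max R 1"] by simp
qed

lemma f_ge_quartic_if_w_ge:
  assumes "a > 0" and "\<forall>\<^sub>F r in at_top. a \<le> w r"
  shows "\<exists>c>0. \<forall>\<^sub>F r in at_top. c * r ^ 4 \<le> f r"
proof -
  have "\<exists>c1>0. \<forall>\<^sub>F r in at_top. c1 * r ^ Suc 0 \<le> v' r"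
    using assms by (intro eventually_ge_power_if_weighted_DERIV_ge[OF v'_weighted_DERIV]) simp_all
  then obtain c1 where "c1 > 0" "\<forall>\<^sub>F r in at_top. c1 * r ^ 1 \<le> v' r" by auto
  moreover have "((\<lambda>s. s ^ 0 * v s) has_real_derivative r ^ 0 * v' r) (at r)" for r
    using v_deriv by simp
  ultimately have "\<exists>c2>0. \<forall>\<^sub>F r in at_top. c2 * r ^ Suc 1 \<le> v r"
    by (intro eventually_ge_power_if_weighted_DERIV_ge[of 0 v v'])
  then obtain c2 where "c2 > 0" "\<forall>\<^sub>F r in at_top. c2 * r ^ 2 \<le> v r"
    by (auto simp: numeral_2_eq_2)
  then have "\<exists>c3>0. \<forall>\<^sub>F r in at_top. c3 * r ^ Suc 2 \<le> f' r"
    by (intro eventually_ge_power_if_weighted_DERIV_ge[OF f'_weighted_DERIV])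
  then obtain c3 where "c3 > 0" "\<forall>\<^sub>F r in at_top. c3 * r ^ 3 \<le> f' r"
    by (auto simp: numeral_3_eq_3)
  moreover have "((\<lambda>s. s ^ 0 * f s) has_real_derivative r ^ 0 * f' r) (at r)" for r
    using f_deriv by simp
  ultimately have "\<exists>c>0. \<forall>\<^sub>F r in at_top. c * r ^ Suc 3 \<le> f r"
    by (intro eventually_ge_power_if_weighted_DERIV_ge[of 0 f f'])
  then show ?thesis by (simp add: numeral_eq_Suc)
qed

lemma w'_le_powr_if_f_ge_quartic:
  assumes "c > 0" and "R \<ge> 1" and f_ge: "\<And>r. r \<ge> R \<Longrightarrow> c * r ^ 4 \<le> f r"
    and "\<gamma> \<le> 4 * q" and "\<gamma> < real n" and "q > 0"
  shows "\<exists>M\<ge>0. \<forall>r\<ge>R. w' r \<le> M * r powr (1 - \<gamma>)"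
proof (rule le_powr_if_weighted_DERIV_le[OF \<open>R \<ge> 1\<close>])
  show "((\<lambda>s. s ^ (n - 1) * w' s) has_real_derivative r ^ (n - 1) * f r powr (- q)) (at r)"
    if "r \<ge> R" for r
    using that \<open>R \<ge> 1\<close> by (intro w'_weighted_DERIV) simp
  show "f r powr (- q) \<le> c powr (- q) * r powr (- \<gamma>)" if "r \<ge> R" for r
  proof -
    have "r > 0" using that \<open>R \<ge> 1\<close> by simp
    have "f r powr (- q) \<le> (c * r ^ 4) powr (- q)"
      using f_ge[OF that] \<open>c > 0\<close> \<open>r > 0\<close> \<open>q > 0\<close> by (intro powr_mono2') auto
    also have "\<dots> = c powr (- q) * (r powr 4) powr (- q)"
      using \<open>c > 0\<close> \<open>r > 0\<close> powr_realpow[OF \<open>r > 0\<close>, of 4] by (simp add: powr_mult)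
    also have "\<dots> = c powr (- q) * r powr (- (4 * q))"
      by (simp add: powr_powr)
    also have "\<dots> \<le> c powr (- q) * r powr (- \<gamma>)"
      using assms(4) that \<open>R \<ge> 1\<close> by (intro mult_left_mono powr_mono) auto
    finally show ?thesis .
  qed
  show "c powr (- q) \<ge> 0" by simp
  show "\<gamma> < real (n - 1) + 1" using \<open>\<gamma> < real n\<close> by simp
qed

lemma w_bounded_if_f_ge_quartic:
  assumes "n \<ge> 3" and "q > 1/2" and "c > 0" and "\<forall>\<^sub>F r in at_top. c * r ^ 4 \<le> f r"
  shows "\<exists>B. \<forall>r\<ge>0. w r \<le> B"
proof -
  obtain R where R: "\<And>r. r \<ge> R \<Longrightarrow> c * r ^ 4 \<le> f r"
    using assms(4) unfolding eventually_at_top_linorder by blast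
  define R1 where "R1 = max R 1"
  txt \<open>Any \<open>\<gamma> \<in> (2, min (4q) n)\<close> works: \<open>\<gamma> < n\<close> is needed to integrate \<open>w''\<close>,
    \<open>\<gamma> > 2\<close> to integrate \<open>w'\<close> to a bounded function.\<close>
  define \<gamma> where "\<gamma> = min (4 * q) (5 / 2)"
  have \<gamma>: "\<gamma> > 2" "\<gamma> \<le> 4 * q" "\<gamma> < real n"
    using assms(1,2) unfolding \<gamma>_def by auto
  have "R1 \<ge> 1" "\<And>r. r \<ge> R1 \<Longrightarrow> c * r ^ 4 \<le> f r" "q > 0"
    using R assms(2) unfolding R1_def by auto
  then obtain M where "M \<ge> 0" and M: "\<And>r. r \<ge> R1 \<Longrightarrow> w' r \<le> M * r powr (1 - \<gamma>)"
    using w'_le_powr_if_f_ge_quartic[OF \<open>c > 0\<close> _ _ \<gamma>(2,3)] by blast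
  define B where "B = w R1 + M * R1 powr (2 - \<gamma>) / (\<gamma> - 2)"
  have "w r \<le> B" if "r \<ge> 0" for r
  proof (cases "r \<le> R1")
    case True
    have "0 \<le> M * R1 powr (2 - \<gamma>) / (\<gamma> - 2)" using \<open>M \<ge> 0\<close> \<gamma>(1) by simp
    then show ?thesis using w_mono[OF that True] unfolding B_def by linarith
  next
    case False
    then show ?thesis unfolding B_def
      by (intro bounded_if_DERIV_le_powr[OF _ w_deriv M \<open>M \<ge> 0\<close> \<gamma>(1)]) (auto simp: R1_def)
  qed
  then show ?thesis by blast
qed

lemma w_tendsto_Sup_if_bounded:
  assumes "\<And>r. r \<ge> 0 \<Longrightarrow> w r \<le> B"
  shows "(w \<longlongrightarrow> (SUP r\<in>{0..}. w r)) at_top" and "r \<ge> 0 \<Longrightarrow> w r < (SUP r\<in>{0..}. w r)"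
proof -
  have bdd: "bdd_above (w ` {0..})" using assms by (auto intro!: bdd_aboveI)
  have le: "w r \<le> (SUP r\<in>{0..}. w r)" if "r \<ge> 0" for r
    using bdd that by (intro cSUP_upper) auto
  show "(w \<longlongrightarrow> (SUP r\<in>{0..}. w r)) at_top"
  proof (rule order_tendstoI)
    fix a assume "a < (SUP r\<in>{0..}. w r)"
    then obtain r0 where r0: "r0 \<ge> 0" "a < w r0"
      using less_cSUP_iff[OF _ bdd, of a] by auto
    show "\<forall>\<^sub>F r in at_top. a < w r"
      using eventually_ge_at_top[of r0] by eventually_elim (use r0 w_mono in force)
  next
    fix b assume b: "(SUP r\<in>{0..}. w r) < b"
    show "\<forall>\<^sub>F r in at_top. w r < b"
      using eventually_ge_at_top[of 0] by eventually_elim (use le b in force)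
  qed
  show "r \<ge> 0 \<Longrightarrow> w r < (SUP r\<in>{0..}. w r)"
    using w_less[of r "r + 1"] le[of "r + 1"] by simp
qed

lemma f_div_quartic_tendsto:
  assumes "(w \<longlongrightarrow> L) at_top"
  shows "((\<lambda>r. f r / r ^ 4) \<longlongrightarrow> L / (8 * real n * (real n + 2))) at_top"
proof -
  have n: "real (n - 1 + 0 + 1) = real n" "real (n - 1 + 2 + 1) = real n + 2"
    using n_ge_2 by simp_all
  have "((\<lambda>r. v' r / r ^ Suc 0) \<longlongrightarrow> L / real (n - 1 + 0 + 1)) at_top"
    using assms by (intro tendsto_div_power_if_weighted_DERIV[OF v'_weighted_DERIV]) simp_all
  then have "((\<lambda>r. v r / r ^ Suc 1) \<longlongrightarrow> L / real n / real (0 + 1 + 1)) at_top"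
    unfolding n by (intro tendsto_div_power_if_weighted_DERIV[of 0 v v']) (use v_deriv in simp_all)
  then have "((\<lambda>r. f' r / r ^ Suc 2) \<longlongrightarrow> L / real n / 2 / real (n - 1 + 2 + 1)) at_top"
    by (intro tendsto_div_power_if_weighted_DERIV[OF f'_weighted_DERIV]) (simp_all add: numeral_2_eq_2)
  then have "((\<lambda>r. f r / r ^ Suc 3) \<longlongrightarrow> L / real n / 2 / (real n + 2) / real (0 + 3 + 1)) at_top"
    unfolding n by (intro tendsto_div_power_if_weighted_DERIV[of 0 f f']) (use f_deriv in simp_all)
  moreover have "L / real n / 2 / (real n + 2) / real (0 + 3 + 1) = L / (8 * real n * (real n + 2))"
    and "Suc 3 = 4"
    by simp_all
  ultimately show ?thesis by metis
qed

end

section \<open>Radial solutions in \<open>\<real>\<^sup>n\<close>\<close>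

lemma radial_sol_radial_profiles:
  fixes u :: "real^'n::finite \<Rightarrow> real" and k :: 'n
  assumes sol: "radial_sol q u" and "CARD('n) \<ge> 2"
  shows "radial_profiles CARD('n) q
      (ray k u) (ray k (partial k u)) (ray k (partial k (partial k u)))
      (ray k (laplacian u)) (ray k (partial k (laplacian u)))
      (ray k (partial k (partial k (laplacian u))))
      (ray k (laplacian (laplacian u))) (ray k (partial k (laplacian (laplacian u))))
      (ray k (partial k (partial k (laplacian (laplacian u)))))"
proof -
  have C6: "Ck (Suc (Suc 4)) u" and rad: "radial u"
    using sol by (simp_all add: radial_sol_def numeral_eq_Suc)
  have C4: "Ck (Suc (Suc 2)) (laplacian u)"
    using Ck_laplacian[OF C6] by (simp add: numeral_eq_Suc)
  have C2: "Ck (Suc (Suc 0)) (laplacian (laplacian u))"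
    using Ck_laplacian[OF C4] by (simp add: numeral_eq_Suc)
  have rad4: "radial (laplacian u)" and rad2: "radial (laplacian (laplacian u))"
    using radial_laplacian C6 C4 rad by blast+
  show ?thesis
  proof
    show "(ray k u has_real_derivative ray k (partial k u) r) (at r)" for r
      by (rule ray_has_real_derivative[OF C6])
    show "(ray k (partial k u) has_real_derivative ray k (partial k (partial k u)) r) (at r)" for r
      using C6 by (intro ray_has_real_derivative[of 4]) (simp add: numeral_eq_Suc)
    show "(ray k (laplacian u) has_real_derivative ray k (partial k (laplacian u)) r) (at r)" for r
      by (rule ray_has_real_derivative[OF C4])
    show "(ray k (partial k (laplacian u)) has_real_derivative
        ray k (partial k (partial k (laplacian u))) r) (at r)" for r
      using C4 by (intro ray_has_real_derivative[of 2]) (simp add: numeral_eq_Suc)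
    show "(ray k (laplacian (laplacian u)) has_real_derivative
        ray k (partial k (laplacian (laplacian u))) r) (at r)" for r
      by (rule ray_has_real_derivative[OF C2])
    show "(ray k (partial k (laplacian (laplacian u))) has_real_derivative
        ray k (partial k (partial k (laplacian (laplacian u)))) r) (at r)" for r
      using C2 by (intro ray_has_real_derivative[of 0]) (simp add: numeral_eq_Suc)
    show "ray k u r > 0" for r
      using sol by (simp add: radial_sol_def ray_def)
    show "ray k (laplacian u) r =
        ray k (partial k (partial k u)) r + (real CARD('n) - 1) / r * ray k (partial k u) r"
      if "r > 0" for r
      using laplacian_ray[OF C6 rad that] by simp
    show "ray k (laplacian (laplacian u)) r = ray k (partial k (partial k (laplacian u))) r
        + (real CARD('n) - 1) / r * ray k (partial k (laplacian u)) r"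
      if "r > 0" for r
      using laplacian_ray[OF C4 rad4 that] by simp
    show "ray k (partial k (partial k (laplacian (laplacian u)))) r
        + (real CARD('n) - 1) / r * ray k (partial k (laplacian (laplacian u))) r
        = ray k u r powr - q"
      if "r > 0" for r
      using laplacian_ray[OF C2 rad2 that] sol by (simp add: radial_sol_def ray_def)
  qed (use assms(2) in simp)
qed

lemma radial_sol_obtain_profiles:
  fixes u :: "real^'n::finite \<Rightarrow> real"
  assumes "radial_sol q u" and "CARD('n) \<ge> 2"
  obtains f f' f'' v v' v'' w w' w''
  where "radial_profiles CARD('n) q f f' f'' v v' v'' w w' w''"
    and "\<And>x. u x = f (norm x)" and "\<And>x. laplacian u x = v (norm x)"
    and "\<And>x. laplacian (laplacian u) x = w (norm x)"
proof -
  obtain k :: 'n where True by simp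
  have C6: "Ck (Suc (Suc 4)) u" and "radial u"
    using assms(1) by (simp_all add: radial_sol_def numeral_eq_Suc)
  have C4: "Ck (Suc (Suc 2)) (laplacian u)"
    using Ck_laplacian[OF C6] by (simp add: numeral_eq_Suc)
  have "radial (laplacian u)"
    by (rule radial_laplacian[OF C6 \<open>radial u\<close>])
  moreover have "radial (laplacian (laplacian u))"
    by (rule radial_laplacian[OF C4 \<open>radial (laplacian u)\<close>])
  ultimately show ?thesis
    using that[OF radial_sol_radial_profiles[OF assms, of k]] radial_eq_ray \<open>radial u\<close> by blast
qed

lemma eventually_norm_at_infinity_iff:
  "(\<forall>\<^sub>F x::real^'n::finite in at_infinity. P (norm x)) \<longleftrightarrow> (\<forall>\<^sub>F r in at_top. P r)"
proof
  obtain k :: 'n where True by simp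
  assume "\<forall>\<^sub>F x::real^'n in at_infinity. P (norm x)"
  moreover have "filterlim (\<lambda>r::real. r *\<^sub>R axis k (1::real)) at_infinity at_top"
    unfolding filterlim_at_infinity_conv_norm_at_top filterlim_at_top
  proof
    fix Z :: real
    show "\<forall>\<^sub>F r in at_top. Z \<le> norm (r *\<^sub>R axis k (1::real))"
      using eventually_ge_at_top[of Z] by eventually_elim simp
  qed
  ultimately have "\<forall>\<^sub>F r in at_top. P (norm (r *\<^sub>R axis k (1::real)))"
    unfolding filterlim_iff by blast
  then show "\<forall>\<^sub>F r in at_top. P r"
    using eventually_ge_at_top[of 0] by eventually_elim simp
next
  assume "\<forall>\<^sub>F r in at_top. P r"
  then show "\<forall>\<^sub>F x::real^'n in at_infinity. P (norm x)"
    using filterlim_norm_at_top unfolding filterlim_iff by blast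
qed

lemma filterlim_norm_at_infinity_iff:
  "filterlim (\<lambda>x::real^'n::finite. \<phi> (norm x)) F at_infinity \<longleftrightarrow> filterlim \<phi> F at_top"
proof -
  have "(\<forall>\<^sub>F x::real^'n in at_infinity. P (\<phi> (norm x))) \<longleftrightarrow> (\<forall>\<^sub>F r in at_top. P (\<phi> r))" for P
    by (rule eventually_norm_at_infinity_iff)
  then show ?thesis unfolding filterlim_iff by blast
qed

lemma radial_sol_limit_formula:
  fixes u :: "real^'n::finite \<Rightarrow> real"
  assumes sol: "radial_sol q u" and "CARD('n) \<ge> 3" and "q > 1/2"
    and liminf: "Liminf at_infinity (\<lambda>x. ereal (u x / norm x ^ 4)) > 0"
  shows "\<exists>L>0. (laplacian (laplacian u) \<longlongrightarrow> L) at_infinity \<and>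
    ((\<lambda>x. u x / norm x ^ 4) \<longlongrightarrow> L / (8 * real CARD('n) * (real CARD('n) + 2))) at_infinity"
proof -
  have "CARD('n) \<ge> 2" using \<open>CARD('n) \<ge> 3\<close> by simp
  then obtain f f' f'' v v' v'' w w' w''
    where "radial_profiles CARD('n) q f f' f'' v v' v'' w w' w''"
      and u: "\<And>x. u x = f (norm x)" and w: "\<And>x. laplacian (laplacian u) x = w (norm x)"
    using radial_sol_obtain_profiles[OF sol] by metis
  then interpret radial_profiles "CARD('n)" q f f' f'' v v' v'' w w' w'' by simp
  obtain c where "0 < ereal c" and "ereal c < Liminf at_infinity (\<lambda>x. ereal (u x / norm x ^ 4))"
    using ereal_dense2[OF liminf] by blast
  then have "c > 0" and "\<forall>\<^sub>F x in at_infinity. ereal c < ereal (u x / norm x ^ 4)"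
    by (auto dest: less_LiminfD)
  then have "\<forall>\<^sub>F x::real^'n in at_infinity. c < f (norm x) / norm x ^ 4"
    unfolding u by simp
  then have "\<forall>\<^sub>F r in at_top. c < f r / r ^ 4"
    by (rule eventually_norm_at_infinity_iff[THEN iffD1])
  then have quartic: "\<forall>\<^sub>F r in at_top. c * r ^ 4 \<le> f r"
    using eventually_gt_at_top[of 0] by eventually_elim (simp add: pos_less_divide_eq less_imp_le)
  obtain B where "\<forall>r\<ge>0. w r \<le> B"
    using w_bounded_if_f_ge_quartic[OF \<open>CARD('n) \<ge> 3\<close> \<open>q > 1/2\<close> \<open>c > 0\<close> quartic] by blast
  define L where "L = (SUP r\<in>{0..}. w r)"
  have lim: "(w \<longlongrightarrow> L) at_top" and below: "\<And>r. r \<ge> 0 \<Longrightarrow> w r < L"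
    unfolding L_def using w_tendsto_Sup_if_bounded \<open>\<forall>r\<ge>0. w r \<le> B\<close> by blast+
  have "L > 0"
  proof (rule ccontr)
    txt \<open>Otherwise \<open>w < 0\<close>, so \<open>f\<close> grows at most quadratically.\<close>
    assume "\<not> L > 0"
    then have "w r < 0" if "r > 0" for r
      using below[of r] that by simp
    then have quadratic: "f r \<le> f 0 + v 0 / (2 * real CARD('n)) * r\<^sup>2" if "r \<ge> 0" for r
      using f_le_quadratic_if_w_neg that by blast
    have "\<forall>\<^sub>F r in at_top. r \<ge> 0 \<and> c * r ^ 4 \<le> f r \<and>
        f 0 + v 0 / (2 * real CARD('n)) * r\<^sup>2 < c * r ^ 4"
      using quartic eventually_ge_at_top[of 0]
        eventually_quadratic_less_quartic[OF \<open>c > 0\<close>, of "f 0" "v 0 / (2 * real CARD('n))"]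
      by (auto intro: eventually_conj)
    then obtain r where "r \<ge> 0" "c * r ^ 4 \<le> f r" "f 0 + v 0 / (2 * real CARD('n)) * r\<^sup>2 < c * r ^ 4"
      unfolding eventually_at_top_linorder by blast
    then show False using quadratic[of r] by simp
  qed
  moreover have "(laplacian (laplacian u) \<longlongrightarrow> L) at_infinity"
    using lim unfolding w filterlim_norm_at_infinity_iff .
  moreover have "((\<lambda>x. u x / norm x ^ 4) \<longlongrightarrow> L / (8 * real CARD('n) * (real CARD('n) + 2))) at_infinity"
    using f_div_quartic_tendsto[OF lim]
    unfolding u filterlim_norm_at_infinity_iff[where \<phi> = "\<lambda>r. f r / r ^ 4"] .
  ultimately show ?thesis by blast
qed

lemma radial_sol_Liminf_pos:
  fixes u :: "real^'n::finite \<Rightarrow> real" and L :: ereal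
  assumes sol: "radial_sol q u" and "CARD('n) \<ge> 2" and "L > 0"
    and lim: "((\<lambda>x. ereal (laplacian (laplacian u) x)) \<longlongrightarrow> L) at_infinity"
  shows "Liminf at_infinity (\<lambda>x. ereal (u x / norm x ^ 4)) > 0"
proof -
  obtain f f' f'' v v' v'' w w' w''
    where "radial_profiles CARD('n) q f f' f'' v v' v'' w w' w''"
      and u: "\<And>x. u x = f (norm x)" and w: "\<And>x. laplacian (laplacian u) x = w (norm x)"
    using radial_sol_obtain_profiles[OF sol \<open>CARD('n) \<ge> 2\<close>] by metis
  then interpret radial_profiles "CARD('n)" q f f' f'' v v' v'' w w' w'' by simp
  have "((\<lambda>r. ereal (w r)) \<longlongrightarrow> L) at_top"
    using lim unfolding w filterlim_norm_at_infinity_iff[where \<phi> = "\<lambda>r. ereal (w r)"] .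
  moreover obtain a where "0 < ereal a" "ereal a < L"
    using ereal_dense2[OF \<open>L > 0\<close>] by blast
  ultimately have "\<forall>\<^sub>F r in at_top. a \<le> w r"
    by (auto dest: order_tendstoD(1) elim!: eventually_mono)
  with \<open>0 < ereal a\<close> obtain c where "c > 0" and quartic: "\<forall>\<^sub>F r in at_top. c * r ^ 4 \<le> f r"
    using f_ge_quartic_if_w_ge by auto
  have "\<forall>\<^sub>F r in at_top. c \<le> f r / r ^ 4"
    using quartic eventually_gt_at_top[of 0] by eventually_elim (simp add: pos_le_divide_eq)
  then have "\<forall>\<^sub>F x::real^'n in at_infinity. c \<le> f (norm x) / norm x ^ 4"
    by (rule eventually_norm_at_infinity_iff[THEN iffD2])
  then have "ereal c \<le> Liminf at_infinity (\<lambda>x. ereal (u x / norm x ^ 4))"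
    unfolding u by (intro Liminf_bounded) simp
  then show ?thesis
    using \<open>c > 0\<close> by (metis ereal_less(2) order_less_le_trans)
qed

lemma radial_sol_bilaplacian_tendsto_0:
  fixes u :: "real^'n::finite \<Rightarrow> real"
  assumes sol: "radial_sol q u" and "CARD('n) \<ge> 2"
    and lim: "(laplacian (laplacian u) \<longlongrightarrow> 0) at_infinity"
  shows "laplacian (laplacian u) x < 0" and "laplacian u x > 0"
    and "\<exists>C>0. \<exists>R. \<forall>x. norm x \<ge> R \<longrightarrow> u x \<le> C * (norm x)\<^sup>2"
proof -
  obtain f f' f'' v v' v'' w w' w''
    where "radial_profiles CARD('n) q f f' f'' v v' v'' w w' w''"
      and u: "\<And>x. u x = f (norm x)" and v: "\<And>x. laplacian u x = v (norm x)"
      and w: "\<And>x. laplacian (laplacian u) x = w (norm x)"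
    using radial_sol_obtain_profiles[OF sol \<open>CARD('n) \<ge> 2\<close>] by blast
  then interpret radial_profiles "CARD('n)" q f f' f'' v v' v'' w w' w'' by simp
  have "(w \<longlongrightarrow> 0) at_top"
    using lim unfolding w filterlim_norm_at_infinity_iff .
  then have w_neg: "\<And>r. r \<ge> 0 \<Longrightarrow> w r < 0" and v_pos: "\<And>r. r \<ge> 0 \<Longrightarrow> v r > 0"
    using w_neg_if_tendsto_0 v_pos_if_tendsto_0 by blast+
  then show "laplacian (laplacian u) x < 0" and "laplacian u x > 0"
    unfolding v w by simp_all
  define C where "C = \<bar>f 0\<bar> + \<bar>v 0 / (2 * real CARD('n))\<bar> + 1"
  have "u y \<le> C * (norm y)\<^sup>2" if "norm y \<ge> 1" for y
  proof -
    have "(norm y)\<^sup>2 \<ge> 1" using that by (simp add: one_le_power)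
    then have "f 0 \<le> \<bar>f 0\<bar> * (norm y)\<^sup>2"
      using mult_left_mono[of 1 "(norm y)\<^sup>2" "\<bar>f 0\<bar>"] abs_ge_self[of "f 0"] by simp
    moreover have "v 0 / (2 * real CARD('n)) * (norm y)\<^sup>2 \<le> \<bar>v 0 / (2 * real CARD('n))\<bar> * (norm y)\<^sup>2"
      by (rule mult_right_mono[OF abs_ge_self zero_le_power2])
    moreover have "u y \<le> f 0 + v 0 / (2 * real CARD('n)) * (norm y)\<^sup>2"
      unfolding u using f_le_quadratic_if_w_neg w_neg by simp
    ultimately show ?thesis
      using zero_le_power2[of "norm y"] unfolding C_def distrib_right by linarith
  qed
  moreover have "C > 0"
    unfolding C_def using abs_ge_zero[of "f 0"] abs_ge_zero[of "v 0 / (2 * real CARD('n))"] by linarith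
  ultimately show "\<exists>C>0. \<exists>R. \<forall>x. norm x \<ge> R \<longrightarrow> u x \<le> C * (norm x)\<^sup>2" by blast
qed

theorem mainTheorem12:
  shows
  "(\<forall>(u::real^'n::finite \<Rightarrow> real) q.
      CARD('n) \<ge> 3 \<and> CARD('n) \<noteq> 4 \<and> CARD('n) \<noteq> 6 \<and> q > 1/2 \<and> radial_sol q u \<and>
      Liminf at_infinity (\<lambda>x. ereal (u x / norm x ^ 4)) > 0 \<longrightarrow>
      (\<exists>L>0. (laplacian (laplacian u) \<longlongrightarrow> L) at_infinity \<and>
             ((\<lambda>x. u x / norm x ^ 4) \<longlongrightarrow> L / (8 * real CARD('n) * (real CARD('n) + 2))) at_infinity))
   \<and>
   (\<forall>(u::real^'n::finite \<Rightarrow> real) q.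
      CARD('n) \<ge> 2 \<and> q > 0 \<and> radial_sol q u \<longrightarrow>
      ((\<forall>L::ereal. L > 0 \<and> ((\<lambda>x. ereal (laplacian (laplacian u) x)) \<longlongrightarrow> L) at_infinity \<longrightarrow>
          Liminf at_infinity (\<lambda>x. ereal (u x / norm x ^ 4)) > 0 \<and>
          (CARD('n) \<ge> 3 \<and> CARD('n) \<noteq> 4 \<and> CARD('n) \<noteq> 6 \<and> q > 1/2 \<longrightarrow>
            (\<exists>L>0. (laplacian (laplacian u) \<longlongrightarrow> L) at_infinity \<and>
              ((\<lambda>x. u x / norm x ^ 4) \<longlongrightarrow> L / (8 * real CARD('n) * (real CARD('n) + 2))) at_infinity)))
       \<and>
       ((laplacian (laplacian u) \<longlongrightarrow> 0) at_infinity \<longrightarrow>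
          (\<forall>x. laplacian (laplacian u) x < 0 \<and> laplacian u x > 0) \<and>
          (\<exists>C>0. \<exists>R. \<forall>x. norm x \<ge> R \<longrightarrow> u x \<le> C * (norm x)\<^sup>2))))"
  by (intro conjI allI impI; elim conjE)
    (blast intro: radial_sol_limit_formula radial_sol_Liminf_pos radial_sol_bilaplacian_tendsto_0)+

end
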